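(* Let $\Pi$ be the topological prismatoid \#2669 of Criado and Santos: a polyhedral $4$-sphere on the $14$ vertices $0,1,2,3,4,5,6,a,b,c,d,e,f,g$ whose simplicial facets are exactly the following $4$-simplices (each string lists the five vertices of a facet): 0234a, 023ad, 123ae, 123cd, 13acd, 14abd, 14acd, 234ae, 23abf, 23acd, 24abf, 4abcd, 0123d, 0126d, 0134e, 013ad, 013ae, 0145f, 014be, 014bf, 0156g, 015ad, 015ae, 015be, 015bf, 015cd, 015cg, 016cd, 016cg, 0245f, 024af, 0256g, 025bf, 025bg, 026ad, 026af, 026bf, 026bg, 034ae, 04abe, 04abf, 05acd, 05ace, 05bce, 05bcg, 06abe, 06abf, 06acd, 06ace, 06bce, 06bcg, 1234e, 123ag, 123cg, 1245f, 124ae, 124ag, 124bf, 124bg, 1256g, 125bf, 125bg, 126cd, 126cg, 13acg, 14abe, 14acg, 14bcd, 14bcg, 15abd, 15abe, 15bcd, 15bcg, 23abg, 23acf, 23bcf, 23bcg, 24abg, 26acd, 26acf, 26bcf, 26bcg, 3abfg, 3acfg, 3bcfg, 4abcg, 5abde, 5acde, 5bcde, 6abef, 6acef, 6bcef, and which in addition has exactly two non-simplicial facets, its two bases, with vertex sets $\{0,1,\dots,6\}$ and $\{a,b,\dots,g\}$. Then $\Pi$ is not realizable: there is no convex $5$-polytope whose boundary complex is combinatorially isomorphic to $\Pi$.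
   Context: A topological prismatoid (Criado–Santos) is a combinatorial abstraction of a geometric prismatoid, i.e. of a polytope all of whose vertices lie in two parallel facets (the bases); all other facets are here simplices. *)

theory Defs
  imports "HOL-Analysis.Analysis"
begin

datatype vtx = V0 | V1 | V2 | V3 | V4 | V5 | V6 | Va | Vb | Vc | Vd | Ve | Vf | Vg

definition vx :: "char \<Rightarrow> vtx" where
  "vx c = the (map_of [(CHR ''0'', V0), (CHR ''1'', V1), (CHR ''2'', V2), (CHR ''3'', V3),
     (CHR ''4'', V4), (CHR ''5'', V5), (CHR ''6'', V6), (CHR ''a'', Va), (CHR ''b'', Vb),
     (CHR ''c'', Vc), (CHR ''d'', Vd), (CHR ''e'', Ve), (CHR ''f'', Vf), (CHR ''g'', Vg)] c)"

definition simplicial_facets :: "vtx set set" where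
  "simplicial_facets = (\<lambda>s. vx ` set s) ` set [
    ''0234a'',
    ''023ad'',
    ''123ae'',
    ''123cd'',
    ''13acd'',
    ''14abd'',
    ''14acd'',
    ''234ae'',
    ''23abf'',
    ''23acd'',
    ''24abf'',
    ''4abcd'',
    ''0123d'',
    ''0126d'',
    ''0134e'',
    ''013ad'',
    ''013ae'',
    ''0145f'',
    ''014be'',
    ''014bf'',
    ''0156g'',
    ''015ad'',
    ''015ae'',
    ''015be'',
    ''015bf'',
    ''015cd'',
    ''015cg'',
    ''016cd'',
    ''016cg'',
    ''0245f'',
    ''024af'',
    ''0256g'',
    ''025bf'',
    ''025bg'',
    ''026ad'',
    ''026af'',
    ''026bf'',
    ''026bg'',
    ''034ae'',
    ''04abe'',
    ''04abf'',
    ''05acd'',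
    ''05ace'',
    ''05bce'',
    ''05bcg'',
    ''06abe'',
    ''06abf'',
    ''06acd'',
    ''06ace'',
    ''06bce'',
    ''06bcg'',
    ''1234e'',
    ''123ag'',
    ''123cg'',
    ''1245f'',
    ''124ae'',
    ''124ag'',
    ''124bf'',
    ''124bg'',
    ''1256g'',
    ''125bf'',
    ''125bg'',
    ''126cd'',
    ''126cg'',
    ''13acg'',
    ''14abe'',
    ''14acg'',
    ''14bcd'',
    ''14bcg'',
    ''15abd'',
    ''15abe'',
    ''15bcd'',
    ''15bcg'',
    ''23abg'',
    ''23acf'',
    ''23bcf'',
    ''23bcg'',
    ''24abg'',
    ''26acd'',
    ''26acf'',
    ''26bcf'',
    ''26bcg'',
    ''3abfg'',
    ''3acfg'',
    ''3bcfg'',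
    ''4abcg'',
    ''5abde'',
    ''5acde'',
    ''5bcde'',
    ''6abef'',
    ''6acef'',
    ''6bcef'']"

definition base_facets :: "vtx set set" where
  "base_facets = {{V0, V1, V2, V3, V4, V5, V6}, {Va, Vb, Vc, Vd, Ve, Vf, Vg}}"

definition prismatoid_facets :: "vtx set set" where
  "prismatoid_facets = simplicial_facets \<union> base_facets"

text \<open>A convex 5-polytope in R^5 realizes the complex if its vertices can be labelled
  injectively by the 14 vertices so that the vertex sets of its facets are exactly the
  facets of the complex (the face lattice of a polytope, like that of the complex, is
  determined by the vertex-facet incidences).\<close>
definition realizes :: "(vtx \<Rightarrow> real^5) \<Rightarrow> vtx set set \<Rightarrow> bool" where
  "realizes v \<F> \<longleftrightarrow>
     (let P = convex hull (range v) in
        inj v \<and> aff_dim P = 5 \<and>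
        {x. x extreme_point_of P} = range v \<and>
        (\<lambda>F. v -` F) ` {F. F facet_of P} = \<F>)"

end

(*
  If v realizes the prismatoid, the brackets [x0 ... x5] = det (v x1 - v x0, ..., v x5 - v x0)
  form an alternating map satisfying the three-term Grassmann-Pluecker relations.  Every facet
  lies in a supporting hyperplane, so six vertices of one facet have bracket 0, and for a
  simplicial facet F the bracket [F q] has the same sign for all vertices q outside F.
  Normalising [01234a] > 0 (otherwise negate all brackets), these conditions, applied along
  chains of facets starting at 0234a, fix the signs of a dozen brackets, and the base
  {0, ..., 6} gives [012346] = 0.  Four Grassmann-Pluecker relations then force the signs of
  [01236a], [01246a], [0126ab] and [0126ag], after which the relation for 012a|346g has three
  negative terms summing to zero.
*)

theory Submission
  imports Defs
begin

section \<open>Determinants as functions of their rows\<close>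

definition det_rows :: "('n::finite \<Rightarrow> real^'n) \<Rightarrow> real" where
  "det_rows f = det (\<chi> i. f i)"

lemma det_rows_upd_eq_if: "det_rows (f(k := x)) = det (\<chi> i. if i = k then x else f i)"
  by (simp add: det_rows_def fun_upd_def)

lemma linear_det_rows_upd: "linear (\<lambda>x. det_rows (f(k := x)))"
proof (rule linearI)
  show "det_rows (f(k := x + y)) = det_rows (f(k := x)) + det_rows (f(k := y))" for x y
    using det_row_add[of k "\<lambda>_. x" "\<lambda>_. y" f] by (simp add: det_rows_upd_eq_if)
  show "det_rows (f(k := c *\<^sub>R x)) = c *\<^sub>R det_rows (f(k := x))" for c x
    using det_row_mul[of k c "\<lambda>_. x" f, unfolded scalar_mult_eq_scaleR]
    by (simp add: det_rows_upd_eq_if)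
qed

lemma det_rows_eq_0_if_rows_eq:
  assumes "i \<noteq> j" "f i = f j"
  shows "det_rows f = 0"
  unfolding det_rows_def using assms by (intro det_identical_rows[of i j]) (auto simp: row_def)

lemma det_rows_transpose:
  assumes "k \<noteq> l"
  shows "det_rows (f \<circ> Transposition.transpose k l) = - det_rows f"
proof -
  have "det_rows (f \<circ> Transposition.transpose k l)
      = of_int (sign (Transposition.transpose k l)) * det_rows f"
    unfolding det_rows_def using det_permute_rows[OF permutes_swap_id, of k l "\<chi> i. f i"]
    by (simp add: o_def)
  then show ?thesis
    using assms by (simp add: sign_swap_id)
qed

lemma det_rows_nonzero_iff_dim:
  fixes f :: "'n::finite \<Rightarrow> real^'n"
  shows "det_rows f \<noteq> 0 \<longleftrightarrow> dim (range f) = CARD('n)"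
proof -
  have "rows (\<chi> i. f i) = range f"
    by (auto simp: rows_def row_def)
  moreover have "dim (range f) \<le> CARD('n)"
    using dim_subset_UNIV[of "range f"] by simp
  ultimately show ?thesis
    unfolding det_rows_def det_eq_0_rank row_rank_def by auto
qed

lemma det_rows_eq_0_if_perp:
  fixes f :: "'n::finite \<Rightarrow> real^'n"
  assumes "a \<noteq> 0" "\<And>i. a \<bullet> f i = 0"
  shows "det_rows f = 0"
proof -
  have "dim (range f) \<le> dim {x::real^'n. a \<bullet> x = 0}"
    using assms(2) by (intro dim_subset) auto
  also have "\<dots> < CARD('n)"
    using dim_hyperplane[OF assms(1)] by simp
  finally show ?thesis
    using det_rows_nonzero_iff_dim[of f] by auto
qed

lemma det_rows_upd_perp:
  fixes f :: "'n::finite \<Rightarrow> real^'n"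
  assumes "a \<noteq> 0" and perp: "\<And>i. i \<noteq> k \<Longrightarrow> a \<bullet> f i = 0"
  shows "det_rows (f(k := x)) = (a \<bullet> x / (a \<bullet> a)) * det_rows (f(k := a))"
proof -
  define t where "t = a \<bullet> x / (a \<bullet> a)"
  have "a \<bullet> (x - t *\<^sub>R a) = 0"
    using assms(1) by (simp add: t_def inner_diff_right)
  then have "det_rows (f(k := x - t *\<^sub>R a)) = 0"
    using perp by (intro det_rows_eq_0_if_perp[OF assms(1)]) simp
  moreover have "det_rows (f(k := x)) = det_rows (f(k := x - t *\<^sub>R a)) + t * det_rows (f(k := a))"
    by (simp add: linear_diff[OF linear_det_rows_upd] linear_scale[OF linear_det_rows_upd])
  ultimately show ?thesis
    by (simp add: t_def)
qed

lemma det_rows_grassmann_pluecker: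
  fixes f :: "'n::finite \<Rightarrow> real^'n"
  assumes "k \<noteq> l"
  defines "D x y \<equiv> det_rows (f(k := x, l := y))"
  shows "D b c * D d e - D b d * D c e + D b e * D c d = 0"
proof -
  have D_swap: "D y x = - D x y" for x y
  proof -
    have "f(k := y, l := x) = f(k := x, l := y) \<circ> Transposition.transpose k l"
      using assms(1) by (auto simp: transpose_def)
    then show ?thesis
      unfolding D_def using det_rows_transpose[OF assms(1)] by simp
  qed
  have D_other_row: "D (f i) y = 0" "D x (f i) = 0" if "i \<noteq> k" "i \<noteq> l" for i x y
    unfolding D_def using that assms(1)
    by (auto intro: det_rows_eq_0_if_rows_eq[of i k] det_rows_eq_0_if_rows_eq[of i l])
  have relation: "D b c * D d e - D b d * D c e + D b e * D c d = 0" if "D d e \<noteq> 0" for b c d e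
  proof -
    define \<phi> where "\<phi> x = D b x * D d e - D b d * D x e + D b e * D x d" for x
    have lin_right: "linear (D x)" for x
      unfolding D_def by (rule linear_det_rows_upd)
    have lin_left: "linear (\<lambda>x. D x y)" for y
      unfolding D_def fun_upd_twist[OF assms(1)] by (rule linear_det_rows_upd)
    have "linear \<phi>"
      by (rule linearI)
        (simp_all add: \<phi>_def linear_add[OF lin_right] linear_scale[OF lin_right]
          linear_add[OF lin_left] linear_scale[OF lin_left] algebra_simps)
    moreover have "\<phi> x = 0" if "x \<in> range (f(k := d, l := e))" for x
      using that D_other_row D_swap[of d d] D_swap[of e e] D_swap[of d e]
      by (auto simp: \<phi>_def algebra_simps)
    moreover have "span (range (f(k := d, l := e))) = UNIV"
      using \<open>D d e \<noteq> 0\<close> dim_eq_full unfolding D_def det_rows_nonzero_iff_dim by fastforce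
    ultimately have "\<phi> c = 0"
      by (metis UNIV_I linear_eq_0_on_span)
    then show ?thesis
      unfolding \<phi>_def .
  qed
  consider "D d e \<noteq> 0" | "D c e \<noteq> 0" | "D c d \<noteq> 0" | "D d e = 0" "D c e = 0" "D c d = 0"
    by blast
  then show ?thesis
  proof cases
    case 2
    with relation[where b = b and c = d and d = c and e = e] show ?thesis
      using D_swap[of c d] by (simp add: algebra_simps)
  next
    case 3
    with relation[where b = b and c = e and d = c and e = d] show ?thesis
      using D_swap[of c e] D_swap[of d e] by (simp add: algebra_simps)
  qed (simp_all add: relation)
qed

lemma det_rows_add_row:
  assumes "i \<noteq> j"
  shows "det_rows (f(i := f i + c *\<^sub>R f j)) = det_rows f"
proof -
  have "det_rows (f(i := f j)) = 0"
    using assms by (intro det_rows_eq_0_if_rows_eq[of i j]) auto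
  then show ?thesis
    by (simp add: linear_add[OF linear_det_rows_upd] linear_scale[OF linear_det_rows_upd])
qed

lemma det_rows_add_to_other_rows:
  "det_rows (\<lambda>i. if i = j then f j else f i + c i *\<^sub>R f j) = det_rows f"
proof -
  have "det_rows (\<lambda>i. if i \<in> S then f i + c i *\<^sub>R f j else f i) = det_rows f"
    if "finite S" "j \<notin> S" for S
    using that
  proof (induction S rule: finite_induct)
    case (insert s S)
    define g where "g = (\<lambda>i. if i \<in> S then f i + c i *\<^sub>R f j else f i)"
    have "(\<lambda>i. if i \<in> insert s S then f i + c i *\<^sub>R f j else f i) = g(s := g s + c s *\<^sub>R g j)"
      using insert.hyps insert.prems by (auto simp: g_def)
    then have "det_rows (\<lambda>i. if i \<in> insert s S then f i + c i *\<^sub>R f j else f i)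
        = det_rows (g(s := g s + c s *\<^sub>R g j))"
      by simp
    also have "\<dots> = det_rows g"
      using insert.prems by (intro det_rows_add_row) auto
    also have "\<dots> = det_rows f"
      using insert.IH insert.prems by (simp add: g_def)
    finally show ?case .
  qed simp
  from this[of "- {j}"]
  have "det_rows (\<lambda>i. if i \<noteq> j then f i + c i *\<^sub>R f j else f i) = det_rows f"
    by simp
  moreover have "(\<lambda>i. if i = j then f j else f i + c i *\<^sub>R f j)
      = (\<lambda>i. if i \<noteq> j then f i + c i *\<^sub>R f j else f i)"
    by auto
  ultimately show ?thesis
    by simp
qed

section \<open>Brackets of six points in \<open>R\<^sup>5\<close>\<close>

lemma exhaust_5:
  fixes x :: 5
  shows "x = 1 \<or> x = 2 \<or> x = 3 \<or> x = 4 \<or> x = 5"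
proof (induct x)
  case (of_int z)
  then have "z = 0 \<or> z = 1 \<or> z = 2 \<or> z = 3 \<or> z = 4"
    by fastforce
  then show ?case
    by auto
qed

lemma forall_5: "(\<forall>i::5. P i) \<longleftrightarrow> P 1 \<and> P 2 \<and> P 3 \<and> P 4 \<and> P 5"
  by (metis exhaust_5)

definition rows5 :: "'a \<Rightarrow> 'a \<Rightarrow> 'a \<Rightarrow> 'a \<Rightarrow> 'a \<Rightarrow> 5 \<Rightarrow> 'a" where
  "rows5 a b c d e =
     (\<lambda>i. if i = 1 then a else if i = 2 then b else if i = 3 then c else if i = 4 then d else e)"

lemma rows5_transpose:
  "rows5 a b c d e \<circ> Transposition.transpose 1 2 = rows5 b a c d e"
  "rows5 a b c d e \<circ> Transposition.transpose 2 3 = rows5 a c b d e"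
  "rows5 a b c d e \<circ> Transposition.transpose 3 4 = rows5 a b d c e"
  "rows5 a b c d e \<circ> Transposition.transpose 4 5 = rows5 a b c e d"
  by (simp_all add: fun_eq_iff forall_5 rows5_def transpose_def)

lemma rows5_upd:
  "(rows5 a b c d e)(1 := x) = rows5 x b c d e"
  "(rows5 a b c d e)(4 := x, 5 := y) = rows5 a b c x y"
  "(rows5 a b c d e)(5 := x) = rows5 a b c d x"
  by (simp_all add: fun_eq_iff forall_5 rows5_def)

lemma range_rows5: "range (rows5 a b c d e) = {a, b, c, d, e}"
proof -
  have "UNIV = {1, 2, 3, 4, 5::5}"
    using exhaust_5 by auto
  moreover have "rows5 a b c d e ` {1, 2, 3, 4, 5} = {a, b, c, d, e}"
    by (auto simp: rows5_def)
  ultimately show ?thesis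
    by simp
qed

(* The 6x6 determinant with rows (1, x_i), reduced by subtracting the first row from the others. *)
definition bracket :: "real^5 \<Rightarrow> real^5 \<Rightarrow> real^5 \<Rightarrow> real^5 \<Rightarrow> real^5 \<Rightarrow> real^5 \<Rightarrow> real" where
  "bracket x0 x1 x2 x3 x4 x5 = det_rows (rows5 (x1 - x0) (x2 - x0) (x3 - x0) (x4 - x0) (x5 - x0))"

lemma det_rows_rows5_swap:
  "det_rows (rows5 b a c d e) = - det_rows (rows5 a b c d e)"
  "det_rows (rows5 a c b d e) = - det_rows (rows5 a b c d e)"
  "det_rows (rows5 a b d c e) = - det_rows (rows5 a b c d e)"
  "det_rows (rows5 a b c e d) = - det_rows (rows5 a b c d e)"
  using det_rows_transpose[of 1 2 "rows5 a b c d e"] det_rows_transpose[of 2 3 "rows5 a b c d e"]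
    det_rows_transpose[of 3 4 "rows5 a b c d e"] det_rows_transpose[of 4 5 "rows5 a b c d e"]
  by (simp_all add: rows5_transpose)

lemma bracket_swap12: "bracket x1 x0 x2 x3 x4 x5 = - bracket x0 x1 x2 x3 x4 x5"
proof -
  define g where "g = rows5 (x0 - x1) (x2 - x0) (x3 - x0) (x4 - x0) (x5 - x0)"
  have "bracket x1 x0 x2 x3 x4 x5 = det_rows (\<lambda>i. if i = 1 then g 1 else g i + 1 *\<^sub>R g 1)"
    unfolding bracket_def
    by (rule arg_cong[where f = det_rows]) (simp add: fun_eq_iff g_def rows5_def)
  also have "\<dots> = det_rows g"
    by (rule det_rows_add_to_other_rows)
  also have "\<dots> = - bracket x0 x1 x2 x3 x4 x5"
    using linear_neg[OF linear_det_rows_upd,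
        of "rows5 0 (x2 - x0) (x3 - x0) (x4 - x0) (x5 - x0)" 1 "x1 - x0"]
    by (simp add: g_def bracket_def rows5_upd)
  finally show ?thesis .
qed

lemma bracket_swap23: "bracket x0 x2 x1 x3 x4 x5 = - bracket x0 x1 x2 x3 x4 x5"
  and bracket_swap34: "bracket x0 x1 x3 x2 x4 x5 = - bracket x0 x1 x2 x3 x4 x5"
  and bracket_swap45: "bracket x0 x1 x2 x4 x3 x5 = - bracket x0 x1 x2 x3 x4 x5"
  and bracket_swap56: "bracket x0 x1 x2 x3 x5 x4 = - bracket x0 x1 x2 x3 x4 x5"
  unfolding bracket_def by (rule det_rows_rows5_swap)+

lemma bracket_grassmann_pluecker:
  "bracket p q r a b c * bracket p q r a d e - bracket p q r a b d * bracket p q r a c e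
    + bracket p q r a b e * bracket p q r a c d = 0"
  using det_rows_grassmann_pluecker[of 4 5 "rows5 (q - p) (r - p) (a - p) 0 0"
      "b - p" "c - p" "d - p" "e - p"]
  by (simp add: bracket_def rows5_upd)

lemma bracket_eq_0_if_cohyperplanar:
  assumes "a \<noteq> 0" and "\<And>x. x \<in> {x0, x1, x2, x3, x4, x5} \<Longrightarrow> a \<bullet> x = b"
  shows "bracket x0 x1 x2 x3 x4 x5 = 0"
  unfolding bracket_def
proof (rule det_rows_eq_0_if_perp[OF assms(1)])
  fix i
  have "rows5 (x1 - x0) (x2 - x0) (x3 - x0) (x4 - x0) (x5 - x0) i
      \<in> {x1 - x0, x2 - x0, x3 - x0, x4 - x0, x5 - x0}"
    by (metis rangeI range_rows5)
  then show "a \<bullet> rows5 (x1 - x0) (x2 - x0) (x3 - x0) (x4 - x0) (x5 - x0) i = 0"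
    using assms(2)[of x0] assms(2)[of x1] assms(2)[of x2] assms(2)[of x3] assms(2)[of x4]
      assms(2)[of x5]
    by (auto simp: inner_diff_right)
qed

lemma bracket_same_side:
  assumes on: "\<And>p. p \<in> {p1, p2, p3, p4, p5} \<Longrightarrow> a \<bullet> p = b"
    and below: "a \<bullet> q < b" "a \<bullet> q' < b"
    and dim: "aff_dim {p1, p2, p3, p4, p5} = 4"
  shows "0 < bracket p1 p2 p3 p4 p5 q * bracket p1 p2 p3 p4 p5 q'"
proof -
  have "a \<noteq> 0"
    using on[of p1] below(1) by auto
  define M where "M = {p2 - p1, p3 - p1, p4 - p1, p5 - p1}"
  define f where "f = rows5 (p2 - p1) (p3 - p1) (p4 - p1) (p5 - p1) 0"
  have M_perp: "a \<bullet> y = 0" if "y \<in> M" for y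
    using that on[of p1] on[of p2] on[of p3] on[of p4] on[of p5]
    by (auto simp: M_def inner_diff_right)
  have "a \<bullet> f i = 0" for i
    using M_perp by (simp add: f_def rows5_def M_def)
  then have bracket_eq:
      "bracket p1 p2 p3 p4 p5 x = (a \<bullet> (x - p1) / (a \<bullet> a)) * det_rows (f(5 := a))" for x
    using det_rows_upd_perp[OF \<open>a \<noteq> 0\<close>, of 5 f "x - p1"] by (simp add: bracket_def f_def rows5_upd)
  have "(+) (- p1) ` {p1, p2, p3, p4, p5} = insert 0 M"
    by (auto simp: M_def)
  then have "dim M = 4"
    using dim aff_dim_eq_dim[of p1 "{p1, p2, p3, p4, p5}"] by (simp add: hull_inc dim_insert span_zero)
  moreover have "span M \<subseteq> {y. a \<bullet> y = 0}"
    using M_perp by (intro span_minimal) (auto simp: subspace_hyperplane)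
  then have "a \<notin> span M"
    using \<open>a \<noteq> 0\<close> by auto
  moreover have "range (f(5 := a)) = insert a M"
    by (auto simp: f_def rows5_upd range_rows5 M_def)
  ultimately have "det_rows (f(5 := a)) \<noteq> 0"
    by (simp add: det_rows_nonzero_iff_dim dim_insert)
  moreover have "a \<bullet> (q - p1) < 0" "a \<bullet> (q' - p1) < 0"
    using below on[of p1] by (auto simp: inner_diff_right)
  ultimately have
      "0 < (a \<bullet> (q - p1)) * (a \<bullet> (q' - p1)) * (det_rows (f(5 := a)))\<^sup>2 / (a \<bullet> a)\<^sup>2"
    using \<open>a \<noteq> 0\<close> by (intro divide_pos_pos mult_pos_pos mult_neg_neg) auto
  then show ?thesis
    by (simp add: bracket_eq power2_eq_square algebra_simps)
qed

section \<open>Grassmann-Pluecker maps compatible with a face structure\<close>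

locale grassmann_pluecker_map =
  fixes \<sigma> :: "'a \<Rightarrow> 'a \<Rightarrow> 'a \<Rightarrow> 'a \<Rightarrow> 'a \<Rightarrow> 'a \<Rightarrow> real"
  assumes swap12: "\<sigma> x1 x0 x2 x3 x4 x5 = - \<sigma> x0 x1 x2 x3 x4 x5"
    and swap23: "\<sigma> x0 x2 x1 x3 x4 x5 = - \<sigma> x0 x1 x2 x3 x4 x5"
    and swap34: "\<sigma> x0 x1 x3 x2 x4 x5 = - \<sigma> x0 x1 x2 x3 x4 x5"
    and swap45: "\<sigma> x0 x1 x2 x4 x3 x5 = - \<sigma> x0 x1 x2 x3 x4 x5"
    and swap56: "\<sigma> x0 x1 x2 x3 x5 x4 = - \<sigma> x0 x1 x2 x3 x4 x5"
    and grassmann_pluecker: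
      "\<sigma> p q r a b c * \<sigma> p q r a d e - \<sigma> p q r a b d * \<sigma> p q r a c e
        + \<sigma> p q r a b e * \<sigma> p q r a c d = 0"

(* The redundant guards orient the swaps, so that simp sorts the arguments of \<sigma>. *)
lemma grassmann_pluecker_map_sort:
  fixes \<sigma> :: "'a::ord \<Rightarrow> 'a \<Rightarrow> 'a \<Rightarrow> 'a \<Rightarrow> 'a \<Rightarrow> 'a \<Rightarrow> real"
  assumes "grassmann_pluecker_map \<sigma>"
  shows "x1 < x0 \<Longrightarrow> \<sigma> x0 x1 x2 x3 x4 x5 = - \<sigma> x1 x0 x2 x3 x4 x5"
    and "x2 < x1 \<Longrightarrow> \<sigma> x0 x1 x2 x3 x4 x5 = - \<sigma> x0 x2 x1 x3 x4 x5"
    and "x3 < x2 \<Longrightarrow> \<sigma> x0 x1 x2 x3 x4 x5 = - \<sigma> x0 x1 x3 x2 x4 x5"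
    and "x4 < x3 \<Longrightarrow> \<sigma> x0 x1 x2 x3 x4 x5 = - \<sigma> x0 x1 x2 x4 x3 x5"
    and "x5 < x4 \<Longrightarrow> \<sigma> x0 x1 x2 x3 x4 x5 = - \<sigma> x0 x1 x2 x3 x5 x4"
  using assms
  by (rule grassmann_pluecker_map.swap12 grassmann_pluecker_map.swap23 grassmann_pluecker_map.swap34
      grassmann_pluecker_map.swap45 grassmann_pluecker_map.swap56)+

lemma grassmann_pluecker_map_uminus:
  assumes "grassmann_pluecker_map \<sigma>"
  shows "grassmann_pluecker_map (\<lambda>x0 x1 x2 x3 x4 x5. - \<sigma> x0 x1 x2 x3 x4 x5)"
proof -
  interpret grassmann_pluecker_map \<sigma>
    by (fact assms)
  show ?thesis
    by unfold_locales
      (unfold neg_equal_iff_equal minus_mult_minus,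
        (rule swap12 swap23 swap34 swap45 swap56 grassmann_pluecker)+)
qed

lemma grassmann_pluecker_map_bracket:
  "grassmann_pluecker_map (\<lambda>x0 x1 x2 x3 x4 x5. bracket (v x0) (v x1) (v x2) (v x3) (v x4) (v x5))"
  by unfold_locales
    (rule bracket_swap12 bracket_swap23 bracket_swap34 bracket_swap45 bracket_swap56
      bracket_grassmann_pluecker)+

(* The vertices of a facet L lie on a hyperplane having all other vertices strictly on one side. *)
definition facet_compatible :: "('a \<Rightarrow> 'a \<Rightarrow> 'a \<Rightarrow> 'a \<Rightarrow> 'a \<Rightarrow> 'a \<Rightarrow> real) \<Rightarrow> 'a set set \<Rightarrow> bool" where
  "facet_compatible \<sigma> \<F> \<longleftrightarrow> (\<forall>L\<in>\<F>.
     (\<forall>x0 x1 x2 x3 x4 x5. {x0, x1, x2, x3, x4, x5} \<subseteq> L \<longrightarrow> \<sigma> x0 x1 x2 x3 x4 x5 = 0) \<and>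
     (\<forall>l1 l2 l3 l4 l5 q q'. L = {l1, l2, l3, l4, l5} \<and> q \<notin> L \<and> q' \<notin> L \<longrightarrow>
        0 < \<sigma> l1 l2 l3 l4 l5 q * \<sigma> l1 l2 l3 l4 l5 q'))"

lemma facet_compatible_uminus:
  "facet_compatible \<sigma> \<F> \<Longrightarrow> facet_compatible (\<lambda>x0 x1 x2 x3 x4 x5. - \<sigma> x0 x1 x2 x3 x4 x5) \<F>"
  unfolding facet_compatible_def minus_mult_minus neg_equal_0_iff_equal .

lemma UNIV_vtx: "(UNIV :: vtx set) = {V0, V1, V2, V3, V4, V5, V6, Va, Vb, Vc, Vd, Ve, Vf, Vg}"
  using vtx.exhaust by blast

instance vtx :: finite
  by standard (simp add: UNIV_vtx)

fun vtx_index :: "vtx \<Rightarrow> nat" where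
  "vtx_index V0 = 0" | "vtx_index V1 = 1" | "vtx_index V2 = 2" | "vtx_index V3 = 3"
| "vtx_index V4 = 4" | "vtx_index V5 = 5" | "vtx_index V6 = 6" | "vtx_index Va = 7"
| "vtx_index Vb = 8" | "vtx_index Vc = 9" | "vtx_index Vd = 10" | "vtx_index Ve = 11"
| "vtx_index Vf = 12" | "vtx_index Vg = 13"

instantiation vtx :: linorder
begin

definition less_eq_vtx :: "vtx \<Rightarrow> vtx \<Rightarrow> bool" where
  "x \<le> y \<longleftrightarrow> vtx_index x \<le> vtx_index y"

definition less_vtx :: "vtx \<Rightarrow> vtx \<Rightarrow> bool" where
  "x < y \<longleftrightarrow> vtx_index x < vtx_index y"

instance
proof
  have "inj vtx_index"
  proof (rule injI)
    fix x y show "vtx_index x = vtx_index y \<Longrightarrow> x = y"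
      by (cases x; cases y) simp_all
  qed
  then show "x \<le> y \<Longrightarrow> y \<le> x \<Longrightarrow> x = y" for x y :: vtx
    by (auto simp: less_eq_vtx_def inj_eq)
qed (auto simp: less_eq_vtx_def less_vtx_def)

end

lemma realizes_facet_hyperplane:
  assumes "realizes v \<F>" and "L \<in> \<F>"
  obtains a b where "a \<noteq> 0"
    and "\<And>w. w \<in> L \<Longrightarrow> a \<bullet> v w = b" and "\<And>w. w \<notin> L \<Longrightarrow> a \<bullet> v w < b"
    and "aff_dim (v ` L) = 4"
proof -
  define P where "P = convex hull (range v)"
  have "aff_dim P = 5" and "(\<lambda>F. v -` F) ` {F. F facet_of P} = \<F>"
    using assms(1) by (simp_all add: realizes_def Let_def P_def)
  then obtain F where "F facet_of P" and L: "L = v -` F"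
    using assms(2) by auto
  then have face: "F face_of P" and "F \<noteq> {}" "F \<noteq> P" "aff_dim F = 4"
    using \<open>aff_dim P = 5\<close> by (auto simp: facet_of_def)
  have "finite (range v)"
    by simp
  then have "polyhedron P"
    unfolding P_def by (rule polyhedron_convex_hull)
  then obtain a b where "a \<noteq> 0"
    and P_below: "P \<subseteq> {x. a \<bullet> x \<le> b}" and F_eq: "F = P \<inter> {x. a \<bullet> x = b}"
    using face \<open>F \<noteq> {}\<close> \<open>F \<noteq> P\<close> exposed_face_of_polyhedron unfolding exposed_face_of by blast
  have in_P: "v w \<in> P" for w
    unfolding P_def by (simp add: hull_inc)
  have on: "a \<bullet> v w = b" if "w \<in> L" for w
    using that in_P by (simp add: L F_eq)
  have below: "a \<bullet> v w < b" if "w \<notin> L" for w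
    using that in_P[of w] P_below by (force simp: L F_eq)
  obtain S where "S \<subseteq> range v" and F_hull: "F = convex hull S"
    using face_of_convex_hull_subset[OF finite_imp_compact face[unfolded P_def]] \<open>finite (range v)\<close>
    by blast
  then have "S \<subseteq> v ` L"
    by (auto simp: L hull_inc)
  then have "F = convex hull (v ` L)"
    using F_hull hull_mono[of S "v ` L"] hull_minimal[of "v ` L" F] face_of_imp_convex[OF face]
    by (auto simp: L)
  then have "aff_dim (v ` L) = 4"
    using \<open>aff_dim F = 4\<close> by (simp add: aff_dim_convex_hull)
  with \<open>a \<noteq> 0\<close> on below show ?thesis
    using that by blast
qed

lemma realization_facet_compatible:
  assumes "realizes v \<F>"
  shows "facet_compatible (\<lambda>x0 x1 x2 x3 x4 x5. bracket (v x0) (v x1) (v x2) (v x3) (v x4) (v x5)) \<F>"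
  unfolding facet_compatible_def
proof (intro ballI conjI allI impI)
  fix L
  assume "L \<in> \<F>"
  then obtain a b where "a \<noteq> 0" and on: "\<And>w. w \<in> L \<Longrightarrow> a \<bullet> v w = b"
    and below: "\<And>w. w \<notin> L \<Longrightarrow> a \<bullet> v w < b" and "aff_dim (v ` L) = 4"
    using realizes_facet_hyperplane[OF assms] by blast
  show "bracket (v x0) (v x1) (v x2) (v x3) (v x4) (v x5) = 0"
    if "{x0, x1, x2, x3, x4, x5} \<subseteq> L" for x0 x1 x2 x3 x4 x5
    using that on by (intro bracket_eq_0_if_cohyperplanar[OF \<open>a \<noteq> 0\<close>]) auto
  show "0 < bracket (v l1) (v l2) (v l3) (v l4) (v l5) (v q)
      * bracket (v l1) (v l2) (v l3) (v l4) (v l5) (v q')"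
    if "L = {l1, l2, l3, l4, l5} \<and> q \<notin> L \<and> q' \<notin> L" for l1 l2 l3 l4 l5 q q'
    using that on below \<open>aff_dim (v ` L) = 4\<close> by (intro bracket_same_side) auto
qed

lemma prismatoid_facet_same_side:
  assumes "facet_compatible \<sigma> prismatoid_facets"
    and "s \<in> {''0234a'', ''023ad'', ''024af'', ''026ad'', ''026af'', ''026bf'', ''026bg'', ''0123d'',
      ''0126d'', ''123ae'', ''123ag'', ''124ae'', ''124ag'', ''234ae''}"
    and "vx ` set s = {l1, l2, l3, l4, l5}"
    and "q \<notin> {l1, l2, l3, l4, l5}" and "q' \<notin> {l1, l2, l3, l4, l5}"
  shows "0 < \<sigma> l1 l2 l3 l4 l5 q * \<sigma> l1 l2 l3 l4 l5 q'"
proof -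
  have "vx ` set s \<in> prismatoid_facets"
    unfolding prismatoid_facets_def simplicial_facets_def
    by (intro UnI1 imageI) (use assms(2) in auto)
  then show ?thesis
    using assms(1,3-5) unfolding facet_compatible_def by auto
qed

context
  fixes \<sigma> :: "vtx \<Rightarrow> vtx \<Rightarrow> vtx \<Rightarrow> vtx \<Rightarrow> vtx \<Rightarrow> vtx \<Rightarrow> real"
  assumes gp: "grassmann_pluecker_map \<sigma>"
    and compatible: "facet_compatible \<sigma> prismatoid_facets"
    and positive: "0 < \<sigma> V0 V1 V2 V3 V4 Va"
begin

private lemmas side = prismatoid_facet_same_side[OF compatible]
  and sign_simps = grassmann_pluecker_map_sort[OF gp] less_vtx_def vx_def
    zero_less_mult_iff mult_less_0_iff

lemma prismatoid_signs_d:
  shows "0 < \<sigma> V0 V1 V2 V3 V4 Vd" and "0 < \<sigma> V0 V1 V2 V3 V6 Vd" and "0 < \<sigma> V0 V1 V2 V4 V6 Vd"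
    and "\<sigma> V0 V1 V2 V6 Va Vd < 0" and "\<sigma> V0 V1 V2 V6 Vb Vd < 0"
    and "0 < \<sigma> V0 V1 V2 V6 Vd Vf" and "0 < \<sigma> V0 V1 V2 V6 Vd Vg"
proof -
  have pos_0234ad: "0 < \<sigma> V0 V2 V3 V4 Va Vd"
    using side[of "''0234a''" V0 V2 V3 V4 Va V1 Vd] positive by (simp add: sign_simps)
  have pos_0123ad: "0 < \<sigma> V0 V1 V2 V3 Va Vd"
    using side[of "''023ad''" V0 V2 V3 Va Vd V4 V1] pos_0234ad by (simp add: sign_simps)
  have pos_0236ad: "0 < \<sigma> V0 V2 V3 V6 Va Vd"
    using side[of "''023ad''" V0 V2 V3 Va Vd V4 V6] pos_0234ad by (simp add: sign_simps)
  show "0 < \<sigma> V0 V1 V2 V3 V4 Vd"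
    using side[of "''0123d''" V0 V1 V2 V3 Vd Va V4] pos_0123ad by (simp add: sign_simps)
  show pos_01236d: "0 < \<sigma> V0 V1 V2 V3 V6 Vd"
    using side[of "''0123d''" V0 V1 V2 V3 Vd Va V6] pos_0123ad by (simp add: sign_simps)
  show "0 < \<sigma> V0 V1 V2 V4 V6 Vd"
    using side[of "''0126d''" V0 V1 V2 V6 Vd V3 V4] pos_01236d by (simp add: sign_simps)
  show "\<sigma> V0 V1 V2 V6 Va Vd < 0"
    using side[of "''026ad''" V0 V2 V6 Va Vd V3 V1] pos_0236ad by (simp add: sign_simps)
  show "\<sigma> V0 V1 V2 V6 Vb Vd < 0"
    using side[of "''0126d''" V0 V1 V2 V6 Vd V3 Vb] pos_01236d by (simp add: sign_simps)
  show "0 < \<sigma> V0 V1 V2 V6 Vd Vf"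
    using side[of "''0126d''" V0 V1 V2 V6 Vd V3 Vf] pos_01236d by (simp add: sign_simps)
  show "0 < \<sigma> V0 V1 V2 V6 Vd Vg"
    using side[of "''0126d''" V0 V1 V2 V6 Vd V3 Vg] pos_01236d by (simp add: sign_simps)
qed

lemma prismatoid_signs_e:
  shows "0 < \<sigma> V0 V1 V2 V3 Va Vg" and "\<sigma> V0 V1 V2 V4 Va Vg < 0"
proof -
  have pos_0234ae: "0 < \<sigma> V0 V2 V3 V4 Va Ve"
    using side[of "''0234a''" V0 V2 V3 V4 Va V1 Ve] positive by (simp add: sign_simps)
  have pos_1234ae: "0 < \<sigma> V1 V2 V3 V4 Va Ve"
    using side[of "''234ae''" V2 V3 V4 Va Ve V0 V1] pos_0234ae by (simp add: sign_simps)
  have pos_123aeg: "0 < \<sigma> V1 V2 V3 Va Ve Vg"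
    using side[of "''123ae''" V1 V2 V3 Va Ve V4 Vg] pos_1234ae by (simp add: sign_simps)
  have neg_124aeg: "\<sigma> V1 V2 V4 Va Ve Vg < 0"
    using side[of "''124ae''" V1 V2 V4 Va Ve V3 Vg] pos_1234ae by (simp add: sign_simps)
  show "0 < \<sigma> V0 V1 V2 V3 Va Vg"
    using side[of "''123ag''" V1 V2 V3 Va Vg Ve V0] pos_123aeg by (simp add: sign_simps)
  show "\<sigma> V0 V1 V2 V4 Va Vg < 0"
    using side[of "''124ag''" V1 V2 V4 Va Vg Ve V0] neg_124aeg by (simp add: sign_simps)
qed

lemma prismatoid_signs_f:
  shows "0 < \<sigma> V0 V1 V2 V6 Va Vf" and "\<sigma> V0 V1 V2 V6 Vb Vf < 0" and "0 < \<sigma> V0 V1 V2 V6 Vb Vg"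
proof -
  have pos_0234af: "0 < \<sigma> V0 V2 V3 V4 Va Vf"
    using side[of "''0234a''" V0 V2 V3 V4 Va V1 Vf] positive by (simp add: sign_simps)
  have neg_0246af: "\<sigma> V0 V2 V4 V6 Va Vf < 0"
    using side[of "''024af''" V0 V2 V4 Va Vf V3 V6] pos_0234af by (simp add: sign_simps)
  have neg_026abf: "\<sigma> V0 V2 V6 Va Vb Vf < 0"
    using side[of "''026af''" V0 V2 V6 Va Vf V4 Vb] neg_0246af by (simp add: sign_simps)
  have neg_026bfg: "\<sigma> V0 V2 V6 Vb Vf Vg < 0"
    using side[of "''026bf''" V0 V2 V6 Vb Vf Va Vg] neg_026abf by (simp add: sign_simps)
  show "0 < \<sigma> V0 V1 V2 V6 Va Vf"
    using side[of "''026af''" V0 V2 V6 Va Vf V4 V1] neg_0246af by (simp add: sign_simps)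
  show "\<sigma> V0 V1 V2 V6 Vb Vf < 0"
    using side[of "''026bf''" V0 V2 V6 Vb Vf Va V1] neg_026abf by (simp add: sign_simps)
  show "0 < \<sigma> V0 V1 V2 V6 Vb Vg"
    using side[of "''026bg''" V0 V2 V6 Vb Vg Vf V1] neg_026bfg by (simp add: sign_simps)
qed

lemma prismatoid_no_compatible_map_positive: False
proof -
  note gp_relation = grassmann_pluecker_map.grassmann_pluecker[OF gp]
  note sort = grassmann_pluecker_map_sort[OF gp] less_vtx_def
  note d = prismatoid_signs_d and e = prismatoid_signs_e and f = prismatoid_signs_f
  have base: "\<sigma> V0 V1 V2 V3 V4 V6 = 0"
    using compatible unfolding facet_compatible_def prismatoid_facets_def base_facets_def by auto
  have "0 < \<sigma> V0 V1 V2 V3 V4 Vd * \<sigma> V0 V1 V2 V3 V6 Va"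
    using gp_relation[of V0 V1 V2 V3 V4 V6 Va Vd] mult_pos_pos[OF positive d(2)] base by simp
  then have pos_01236a: "0 < \<sigma> V0 V1 V2 V3 V6 Va"
    using d(1) by (simp add: zero_less_mult_iff)
  have "0 < \<sigma> V0 V1 V2 V3 V4 Vd * \<sigma> V0 V1 V2 V4 V6 Va"
    using gp_relation[of V0 V1 V2 V4 V3 V6 Va Vd] mult_pos_pos[OF positive d(3)] base
    by (simp add: sort)
  then have pos_01246a: "0 < \<sigma> V0 V1 V2 V4 V6 Va"
    using d(1) by (simp add: zero_less_mult_iff)
  have "0 < \<sigma> V0 V1 V2 V6 Va Vb * \<sigma> V0 V1 V2 V6 Vd Vf"
    using gp_relation[of V0 V1 V2 V6 Va Vb Vd Vf]
      mult_neg_neg[OF d(4) f(2)] mult_pos_neg[OF f(1) d(5)]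
    by simp
  then have pos_0126ab: "0 < \<sigma> V0 V1 V2 V6 Va Vb"
    using d(6) by (simp add: zero_less_mult_iff)
  have "\<sigma> V0 V1 V2 V6 Va Vg * \<sigma> V0 V1 V2 V6 Vb Vd < 0"
    using gp_relation[of V0 V1 V2 V6 Va Vb Vd Vg]
      mult_pos_pos[OF pos_0126ab d(7)] mult_neg_pos[OF d(4) f(3)]
    by simp
  then have pos_0126ag: "0 < \<sigma> V0 V1 V2 V6 Va Vg"
    using d(5) by (simp add: mult_less_0_iff)
  have "\<sigma> V0 V1 V2 V3 V6 Va * \<sigma> V0 V1 V2 V4 Va Vg
      = \<sigma> V0 V1 V2 V3 V4 Va * \<sigma> V0 V1 V2 V6 Va Vg + \<sigma> V0 V1 V2 V3 Va Vg * \<sigma> V0 V1 V2 V4 V6 Va"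
    using gp_relation[of V0 V1 V2 Va V3 V4 V6 Vg] by (simp add: sort)
  then show False
    using mult_pos_pos[OF positive pos_0126ag] mult_pos_neg[OF pos_01236a e(2)]
      mult_pos_pos[OF e(1) pos_01246a]
    by linarith
qed

end

lemma prismatoid_no_compatible_map:
  fixes \<sigma> :: "vtx \<Rightarrow> vtx \<Rightarrow> vtx \<Rightarrow> vtx \<Rightarrow> vtx \<Rightarrow> vtx \<Rightarrow> real"
  assumes gp: "grassmann_pluecker_map \<sigma>" and compatible: "facet_compatible \<sigma> prismatoid_facets"
  shows False
proof -
  have "0 < \<sigma> V0 V1 V2 V3 V4 Va * \<sigma> V0 V1 V2 V3 V4 Va"
    using prismatoid_facet_same_side[OF compatible, of "''0234a''" V0 V2 V3 V4 Va V1 V1]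
    by (simp add: vx_def grassmann_pluecker_map_sort[OF gp] less_vtx_def)
  then have "\<sigma> V0 V1 V2 V3 V4 Va \<noteq> 0"
    by auto
  then consider "0 < \<sigma> V0 V1 V2 V3 V4 Va" | "0 < - \<sigma> V0 V1 V2 V3 V4 Va"
    by linarith
  then show False
  proof cases
    case 1
    with gp compatible show False
      by (rule prismatoid_no_compatible_map_positive)
  next
    case 2
    with grassmann_pluecker_map_uminus[OF gp] facet_compatible_uminus[OF compatible] show False
      by (rule prismatoid_no_compatible_map_positive)
  qed
qed

theorem mainTheorem5:
  shows "\<not> (\<exists>v :: vtx \<Rightarrow> real^5. realizes v prismatoid_facets)"
proof
  assume "\<exists>v :: vtx \<Rightarrow> real^5. realizes v prismatoid_facets"
  then obtain v :: "vtx \<Rightarrow> real^5" where "realizes v prismatoid_facets"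
    by blast
  then show False
    by (intro prismatoid_no_compatible_map[OF grassmann_pluecker_map_bracket]
        realization_facet_compatible)
qed

end
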